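(* Let $P\subseteq\mathbb{R}^d$ be a $d$-dimensional convex lattice polytope (all vertices in $\mathbb{Z}^d$) that contains no point of $\mathbb{Z}^d$ in its interior and all of whose facets are simplices. Then $P$ has at most $2^d$ vertices.
   Context: A lattice polytope with no lattice points in its interior is called hollow; this result states that the maximum number of vertices of a hollow simplicial lattice polytope in $\mathbb{R}^d$ is at most $2^d$. *)

theory Defs
  imports "HOL-Analysis.Analysis"
begin

definition lattice_point :: "real ^ 'n \<Rightarrow> bool" where
  "lattice_point x \<longleftrightarrow> (\<forall>i. x $ i \<in> \<int>)"

definition lattice_polytope :: "(real ^ 'n) set \<Rightarrow> bool" where
  "lattice_polytope P \<longleftrightarrow> polytope P \<and> (\<forall>v. v extreme_point_of P \<longrightarrow> lattice_point v)"

end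

theory Submission
  imports Defs
begin

text \<open>Call a set W of lattice points of P facet-independent if W \<inter> F is affinely
independent for every facet F; the vertex set of a polytope with simplex facets is one.
If two distinct points u, v of such a set are congruent mod 2, their midpoint m is a
lattice point, so by hollowness it lies on a facet, and every facet containing m also
contains u and v. Replacing the longer of u, v by m keeps the set facet-independent and of
the same size, while the integral potential \<Sum>|w|^2 strictly drops. So some
facet-independent set of the same size has pairwise incongruent points mod 2, and there
are only 2^d classes mod 2.\<close>

lemma nat_floor_less_Ints:
  fixes x y :: real
  assumes "x \<in> \<int>" "y \<in> \<int>" "0 \<le> x" "x < y"
  shows "nat \<lfloor>x\<rfloor> < nat \<lfloor>y\<rfloor>"
  using assms by (auto elim!: Ints_cases)

lemma card_insert_Diff_singleton:
  "finite W \<Longrightarrow> u \<in> W \<Longrightarrow> m \<notin> W \<Longrightarrow> card (insert m (W - {u})) = card W"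
  by (metis card_insert_disjoint card_Suc_Diff1 finite_Diff DiffD1)

lemma midpoint_in_convex:
  "convex S \<Longrightarrow> u \<in> S \<Longrightarrow> v \<in> S \<Longrightarrow> midpoint u v \<in> S"
  using midpoint_in_closed_segment closed_segment_subset by blast

lemma midpoint_in_affine_hull:
  "u \<in> affine hull S \<Longrightarrow> v \<in> affine hull S \<Longrightarrow> midpoint u v \<in> affine hull S"
  using mem_affine[OF affine_affine_hull, of u S v "1/2" "1/2"]
  by (simp add: midpoint_def scaleR_right_distrib)

lemma affine_hull_reflect_midpoint:
  "midpoint u v \<in> affine hull S \<Longrightarrow> v \<in> affine hull S \<Longrightarrow> u \<in> affine hull S"
  using mem_affine[OF affine_affine_hull, of "midpoint u v" S v 2 "-1"]
  by (simp add: midpoint_def scaleR_right_distrib)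

lemma midpoint_notin_affine_independent:
  assumes "\<not> affine_dependent T" "u \<in> T" "v \<in> T" "u \<noteq> v"
  shows "midpoint u v \<notin> T"
proof
  assume m: "midpoint u v \<in> T"
  have "u \<in> T - {midpoint u v}" "v \<in> T - {midpoint u v}"
    using assms by (metis DiffI singletonD midpoint_eq_endpoint)+
  then have "midpoint u v \<in> affine hull (T - {midpoint u v})"
    by (simp add: midpoint_in_affine_hull hull_inc)
  with m assms(1) show False
    unfolding affine_dependent_def by blast
qed

lemma affine_independent_insert_midpoint:
  fixes u v :: "'a::euclidean_space"
  assumes T: "\<not> affine_dependent T" and uv: "u \<in> T" "v \<in> T" "u \<noteq> v"
  shows "\<not> affine_dependent (insert (midpoint u v) (T - {u}))"
proof -
  let ?m = "midpoint u v"
  let ?N = "insert ?m (T - {u})"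
  have "u \<in> affine hull ?N"
    using uv by (intro affine_hull_reflect_midpoint[of u v] hull_inc) auto
  then have "affine hull ?N = affine hull (insert u ?N)"
    by (simp add: hull_redundant)
  also have "insert u ?N = insert ?m T"
    using uv by auto
  also have "affine hull (insert ?m T) = affine hull T"
    using uv by (simp add: hull_redundant midpoint_in_affine_hull hull_inc)
  finally have "aff_dim ?N = aff_dim T"
    by (metis aff_dim_affine_hull)
  moreover have "finite T"
    using T by (rule aff_independent_finite)
  moreover have "card ?N = card T"
    using \<open>finite T\<close> \<open>u \<in> T\<close> midpoint_notin_affine_independent[OF T uv]
    by (rule card_insert_Diff_singleton)
  ultimately show ?thesis
    using T by (simp add: affine_independent_iff_card)
qed

lemma power2_norm_midpoint_less:
  fixes u v :: "'a::real_inner"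
  assumes "u \<noteq> v" "norm v \<le> norm u"
  shows "(norm (midpoint u v))\<^sup>2 < (norm u)\<^sup>2"
proof -
  have parallelogram:
    "4 * (norm (midpoint u v))\<^sup>2 + (norm (u - v))\<^sup>2 = 2 * (norm u)\<^sup>2 + 2 * (norm v)\<^sup>2"
    unfolding power2_norm_eq_inner midpoint_def
    by (simp add: inner_add_left inner_add_right inner_diff_left inner_diff_right
        inner_commute algebra_simps)
  have "(norm (u - v))\<^sup>2 > 0" "(norm v)\<^sup>2 \<le> (norm u)\<^sup>2"
    using assms by (simp_all add: power_mono)
  with parallelogram show ?thesis by linarith
qed

definition facet_independent :: "'a::euclidean_space set \<Rightarrow> 'a set \<Rightarrow> bool" where
  "facet_independent P W \<longleftrightarrow> (\<forall>F. F facet_of P \<longrightarrow> \<not> affine_dependent (W \<inter> F))"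

lemma facet_independent_extreme_points:
  fixes P :: "'a::euclidean_space set"
  assumes "\<And>F. F facet_of P \<Longrightarrow> \<exists>k. k simplex F"
  shows "facet_independent P {v. v extreme_point_of P}"
  unfolding facet_independent_def
proof (intro allI impI)
  fix F assume F: "F facet_of P"
  obtain C where C: "\<not> affine_dependent C" "F = convex hull C"
    using assms[OF F] unfolding simplex_def by blast
  have "{v. v extreme_point_of P} \<inter> F = {v. v extreme_point_of F}"
    using extreme_point_of_face F unfolding facet_of_def by blast
  also have "\<dots> = C"
    using extreme_point_of_convex_hull_affine_independent[OF C(1)] C(2) by blast
  finally show "\<not> affine_dependent ({v. v extreme_point_of P} \<inter> F)"
    using C(1) by simp
qed

lemma facet_independent_exchange_midpoint:
  fixes P :: "'a::euclidean_space set"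
  assumes P: "polyhedron P" and W: "facet_independent P W" "W \<subseteq> P"
    and uv: "u \<in> W" "v \<in> W" "u \<noteq> v" and m: "midpoint u v \<notin> rel_interior P"
  shows "midpoint u v \<notin> W" and "facet_independent P (insert (midpoint u v) (W - {u}))"
proof -
  let ?m = "midpoint u v"
  have "?m \<in> P"
    using W(2) uv by (intro midpoint_in_convex polyhedron_imp_convex[OF P]) auto
  have facet_through_m: "u \<in> F \<and> v \<in> F" if "F facet_of P" "?m \<in> F" for F
    using face_ofD[of F P ?m u v] that W(2) uv unfolding facet_of_def by auto
  obtain F where F: "F facet_of P" "?m \<in> F"
    using rel_boundary_of_polyhedron[OF P] m \<open>?m \<in> P\<close> by blast
  then show "?m \<notin> W"
    using midpoint_notin_affine_independent[of "W \<inter> F" u v] W(1) facet_through_m uv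
    unfolding facet_independent_def by blast
  show "facet_independent P (insert ?m (W - {u}))"
    unfolding facet_independent_def
  proof (intro allI impI)
    fix H assume H: "H facet_of P"
    have H_indep: "\<not> affine_dependent (W \<inter> H)"
      using W(1) H unfolding facet_independent_def by blast
    show "\<not> affine_dependent (insert ?m (W - {u}) \<inter> H)"
    proof (cases "?m \<in> H")
      case True
      then have "insert ?m (W - {u}) \<inter> H = insert ?m (W \<inter> H - {u})"
        by blast
      then show ?thesis
        using affine_independent_insert_midpoint[OF H_indep] facet_through_m[OF H True] uv
        by simp
    next
      case False
      then have "insert ?m (W - {u}) \<inter> H \<subseteq> W \<inter> H"
        by blast
      then show ?thesis
        using H_indep affine_dependent_subset by blast
    qed
  qed
qed

definition parity_class :: "real ^ 'n \<Rightarrow> 'n set" where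
  "parity_class x = {i. odd \<lfloor>x $ i\<rfloor>}"

lemma lattice_point_midpoint:
  assumes "lattice_point u" "lattice_point v" "parity_class u = parity_class v"
  shows "lattice_point (midpoint u v)"
  unfolding lattice_point_def
proof
  fix i
  obtain a b where ab: "u $ i = of_int a" "v $ i = of_int b"
    using assms(1,2) unfolding lattice_point_def by (metis Ints_cases)
  have "i \<in> parity_class u \<longleftrightarrow> i \<in> parity_class v"
    using assms(3) by simp
  then have "even (a + b)"
    using ab unfolding parity_class_def by simp
  then obtain c where "a + b = 2 * c"
    by (elim evenE)
  then have "u $ i + v $ i = 2 * of_int c"
    using ab by (metis of_int_add of_int_mult of_int_numeral)
  then show "midpoint u v $ i \<in> \<int>"
    by (simp add: midpoint_def)
qed

lemma power2_norm_lattice_point_Ints: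
  assumes "lattice_point w"
  shows "(norm w)\<^sup>2 \<in> \<int>"
  using assms unfolding power2_norm_eq_inner inner_vec_def lattice_point_def
  by (intro Ints_sum) auto

lemma card_facet_independent_lattice_set_le:
  fixes P :: "(real ^ 'n) set"
  assumes P: "polyhedron P" and hollow: "\<forall>x \<in> rel_interior P. \<not> lattice_point x"
    and "finite W" "W \<subseteq> P" "\<forall>w \<in> W. lattice_point w" "facet_independent P W"
  shows "card W \<le> 2 ^ CARD('n)"
  using assms(3-)
proof (induction "nat \<lfloor>\<Sum>w\<in>W. (norm w)\<^sup>2\<rfloor>" arbitrary: W rule: less_induct)
  case less
  show ?case
  proof (cases "inj_on parity_class W")
    case True
    then have "card W \<le> card (Pow (UNIV :: 'n set))"
      by (rule card_inj_on_le) auto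
    then show ?thesis
      by (simp add: card_Pow)
  next
    case False
    then obtain u v where uv: "u \<in> W" "v \<in> W" "u \<noteq> v" "parity_class u = parity_class v"
      and "norm v \<le> norm u"
      unfolding inj_on_def by (metis linorder_le_cases)
    let ?m = "midpoint u v"
    let ?W' = "insert ?m (W - {u})"
    have "lattice_point ?m"
      using lattice_point_midpoint less.prems(3) uv by blast
    then have "?m \<notin> rel_interior P"
      using hollow by blast
    note exchange = facet_independent_exchange_midpoint[OF P less.prems(4,2) uv(1-3) this]
    have "?m \<in> P"
      using less.prems(2) uv by (intro midpoint_in_convex polyhedron_imp_convex[OF P]) auto
    have "(\<Sum>w\<in>?W'. (norm w)\<^sup>2) = (norm ?m)\<^sup>2 + (\<Sum>w\<in>W - {u}. (norm w)\<^sup>2)"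
      using less.prems(1) exchange(1) by simp
    also have "\<dots> < (norm u)\<^sup>2 + (\<Sum>w\<in>W - {u}. (norm w)\<^sup>2)"
      using power2_norm_midpoint_less[OF uv(3) \<open>norm v \<le> norm u\<close>] by simp
    also have "\<dots> = (\<Sum>w\<in>W. (norm w)\<^sup>2)"
      using less.prems(1) uv(1) by (simp add: sum.remove)
    finally have "nat \<lfloor>\<Sum>w\<in>?W'. (norm w)\<^sup>2\<rfloor> < nat \<lfloor>\<Sum>w\<in>W. (norm w)\<^sup>2\<rfloor>"
      using less.prems(3) \<open>lattice_point ?m\<close>
      by (intro nat_floor_less_Ints Ints_sum sum_nonneg power2_norm_lattice_point_Ints) auto
    then have "card ?W' \<le> 2 ^ CARD('n)"
      using less.hyps less.prems \<open>?m \<in> P\<close> \<open>lattice_point ?m\<close> exchange by blast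
    moreover have "card ?W' = card W"
      using less.prems(1) uv(1) exchange(1) by (rule card_insert_Diff_singleton)
    ultimately show ?thesis
      by simp
  qed
qed

theorem theorem12:
  fixes P :: "(real ^ 'n) set"
  assumes "lattice_polytope P"
    and "aff_dim P = int CARD('n)"
    and "\<forall>x \<in> interior P. \<not> lattice_point x"
    and "\<forall>F. F facet_of P \<longrightarrow> (\<exists>k. k simplex F)"
  shows "card {v. v extreme_point_of P} \<le> 2 ^ CARD('n)"
proof (rule card_facet_independent_lattice_set_le)
  show P: "polyhedron P"
    using assms(1) polytope_imp_polyhedron unfolding lattice_polytope_def by blast
  show "\<forall>x \<in> rel_interior P. \<not> lattice_point x"
    using assms(2,3) by (simp add: interior_rel_interior)
  show "finite {v. v extreme_point_of P}"
    using P by (rule finite_polyhedron_extreme_points)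
  show "{v. v extreme_point_of P} \<subseteq> P"
    unfolding extreme_point_of_def by blast
  show "\<forall>v \<in> {v. v extreme_point_of P}. lattice_point v"
    using assms(1) unfolding lattice_polytope_def by blast
  show "facet_independent P {v. v extreme_point_of P}"
    using assms(4) by (intro facet_independent_extreme_points) blast
qed

end
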